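(* Let $d\ge2$, $2\le m\le d$, $\boldsymbol{x},\boldsymbol{y}\in\mathbb{R}^d$ and $v=\|\boldsymbol{x}+\boldsymbol{y}\|_2$. For the orthogonal coupling (ORFs), $$\rho_{\mathrm{ORF}}(\boldsymbol{x},\boldsymbol{y})=\frac{\Gamma(\frac d2)}{\Gamma(d)}\sum_{k=0}^\infty\frac{v^{2k}}{2^kk!}\frac{\Gamma(k+d)}{\Gamma(k+\frac d2)},$$ and for the simplex coupling (SimRFs), $$\rho_{\mathrm{SimRF}}(\boldsymbol{x},\boldsymbol{y})=\frac{\sqrt\pi}{\Gamma(\frac d2)2^{d-1}}\sum_{k=0}^\infty\frac{\Gamma(k+d)}{\Gamma(k+\frac d2)}\frac{v^{2k}}{2^k}\sum_{p=0}^k\Big(-\frac{1}{d-1}\Big)^p\frac{\Gamma(\frac{d+p}{2})}{\Gamma(\frac{d+p+1}{2})}\frac{1}{(k-p)!\,p!}.$$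
   Context: RF-conformity of random vectors $\boldsymbol{w}_1,\dots,\boldsymbol{w}_m$: $\rho(\boldsymbol{x},\boldsymbol{y})=\frac{\Gamma(d/2)}{m(m-1)}\sum_{i}\sum_{j\ne i}\mathbb{E}\big(\sum_{k\ge0}\frac{v^{2k}w_{ij}^{2k}}{2^{2k}k!\,\Gamma(k+d/2)}\big)$, $w_{ij}=\|\boldsymbol{w}_i+\boldsymbol{w}_j\|_2$. Let $w_1,\dots,w_d$ be i.i.d. $\chi_d$ and $\mathbf{R}$ Haar-distributed on $\mathrm{O}(d)$, independent. ORFs: $\boldsymbol{w}_i$ ($i\le m$) are rows of $\mathrm{diag}(w_1,\dots,w_d)\mathbf{R}$ (mutually orthogonal directions). SimRFs: $\boldsymbol{w}_i$ ($i\le m$) are rows of $\mathrm{diag}(w_1,\dots,w_d)\mathbf{S}\mathbf{R}$, where $\mathbf{S}$ has rows $\boldsymbol{s}_i=\sqrt{\frac{d}{d-1}}\mathbf{e}_i-\frac{\sqrt d+1}{(d-1)^{3/2}}(1,\dots,1,0)^\top$ ($1\le i<d$), $\boldsymbol{s}_d=\frac{1}{\sqrt{d-1}}(1,\dots,1,0)^\top$; these are unit vectors with pairwise inner product $-\frac1{d-1}$. *)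

theory Defs
  imports "HOL-Probability.Probability"
begin

definition chi_density :: "nat \<Rightarrow> real \<Rightarrow> real" where
  "chi_density d x = (if x > 0 then x ^ (d - 1) * exp (- (x\<^sup>2) / 2)
       / (2 powr (real d / 2 - 1) * Gamma (real d / 2)) else 0)"

text \<open>Haar probability measure on the orthogonal group O(d), seen as a measure on
  d x d real matrices: a Borel probability measure concentrated on the orthogonal
  matrices and invariant under left multiplication by orthogonal matrices.\<close>
definition orth_haar :: "(real^'n^'n) measure \<Rightarrow> bool" where
  "orth_haar N \<longleftrightarrow> prob_space N \<and> sets N = sets borel
     \<and> emeasure N {R. orthogonal_matrix R} = 1
     \<and> (\<forall>Q. orthogonal_matrix Q \<longrightarrow> distr N borel (\<lambda>R. Q ** R) = N)"

text \<open>Coordinates are enumerated by e : {0..<d} -> 'n, so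
  coordinate number i (1-based i+1) is e i; the last coordinate is e (d-1).
  Row e i (i < d-1) is s_{i+1}; row e (d-1) is s_d.\<close>
definition simplex_matrix :: "(nat \<Rightarrow> 'n::finite) \<Rightarrow> real^'n^'n" where
  "simplex_matrix e = (\<chi> r.
     (let d = real CARD('n);
          u = (\<chi> k. if k = e (CARD('n) - 1) then 0 else (1::real))
      in if r = e (CARD('n) - 1) then (1 / sqrt (d - 1)) *\<^sub>R u
         else sqrt (d / (d - 1)) *\<^sub>R axis r 1 - ((sqrt d + 1) / (d - 1) powr (3/2)) *\<^sub>R u))"

definition rf_kernel :: "nat \<Rightarrow> real \<Rightarrow> real \<Rightarrow> real" where
  "rf_kernel d v w = (\<Sum>k. v ^ (2*k) * w ^ (2*k)
       / (2 ^ (2*k) * fact k * Gamma (real k + real d / 2)))"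

definition rf_conformity ::
  "'a measure \<Rightarrow> nat \<Rightarrow> nat \<Rightarrow> real \<Rightarrow> (nat \<Rightarrow> 'a \<Rightarrow> real^'n) \<Rightarrow> real" where
  "rf_conformity M d m v wv = Gamma (real d / 2) / (real m * (real m - 1)) *
     (\<Sum>i<m. \<Sum>j\<in>{..<m} - {i}.
        integral\<^sup>L M (\<lambda>\<omega>. rf_kernel d v (norm (wv i \<omega> + wv j \<omega>))))"

definition orf_vecs ::
  "('n \<Rightarrow> 'a \<Rightarrow> real) \<Rightarrow> ('a \<Rightarrow> real^'n^'n) \<Rightarrow> (nat \<Rightarrow> 'n) \<Rightarrow> nat \<Rightarrow> 'a \<Rightarrow> real^'n" where
  "orf_vecs W R e i \<omega> = W (e i) \<omega> *\<^sub>R (R \<omega> $ e i)"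

definition simrf_vecs ::
  "('n \<Rightarrow> 'a \<Rightarrow> real) \<Rightarrow> ('a \<Rightarrow> real^'n^'n) \<Rightarrow> (nat \<Rightarrow> 'n::finite) \<Rightarrow> nat \<Rightarrow> 'a \<Rightarrow> real^'n" where
  "simrf_vecs W R e i \<omega> = W (e i) \<omega> *\<^sub>R ((simplex_matrix e ** R \<omega>) $ e i)"

end

theory Submission
  imports Defs
begin

text \<open>
  For an orthogonal matrix R and a matrix S with unit rows s_p, s_q, the rows of S R satisfy
  |a (S R)_p + b (S R)_q|^2 = a^2 + b^2 + 2 c a b with c = <s_p, s_q>; here c = 0 for ORFs
  (S = identity) and c = -1/(d-1) for SimRFs. So R drops out and each summand of the
  RF-conformity is the expectation of a power series in Q_c(A, B) = A^2 + B^2 + 2 c A B for two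
  independent chi_d variables A, B. Expanding Q_c^k binomially turns E Q_c^k into a combination
  of chi moments E A^s = 2^(s/2) Gamma((d+s)/2) / Gamma(d/2); the inner sums collapse by the
  Vandermonde identity for rising factorials, and Legendre's duplication formula produces the
  ratios Gamma((d+p)/2) / Gamma((d+p+1)/2). Expectation and series may be exchanged by dominated
  convergence: Q_c <= 2 Q_0 bounds E Q_c^k by 4^k Gamma(d+k) / Gamma(d), which gives a
  convergent majorant.
\<close>

section \<open>Gamma function identities\<close>

lemma Gamma_plus1_real: "(x::real) > 0 \<Longrightarrow> Gamma (x + 1) = x * Gamma x"
  by (rule Gamma_plus1) (auto dest: nonpos_Ints_nonpos)

lemma Gamma_duplication_nat:
  assumes "n \<ge> 1"
  shows "Gamma (real n / 2) * Gamma ((real n + 1) / 2) * 2 ^ (n - 1) = sqrt pi * Gamma (real n)"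
  using assms
proof (induction n rule: nat_induct_at_least)
  case base
  then show ?case by (simp add: Gamma_one_half_real)
next
  case (Suc n)
  have "Gamma (real (Suc n) / 2) * Gamma ((real (Suc n) + 1) / 2) * 2 ^ (Suc n - 1)
      = Gamma ((real n + 1) / 2) * Gamma (real n / 2 + 1) * (2 * 2 ^ (n - 1))"
    using Suc.hyps by (simp add: add_divide_distrib ac_simps flip: power_Suc)
  also have "\<dots> = real n * (Gamma (real n / 2) * Gamma ((real n + 1) / 2) * 2 ^ (n - 1))"
    using Suc.hyps by (simp add: Gamma_plus1_real)
  also have "\<dots> = real n * (sqrt pi * Gamma (real n))"
    by (simp only: Suc.IH)
  also have "\<dots> = sqrt pi * Gamma (real n + 1)"
    using Suc.hyps by (simp add: Gamma_plus1_real)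
  finally show ?case by (simp add: add.commute)
qed

lemma Gamma_nat_plus_half: "Gamma (real k + 1/2) = sqrt pi * fact (2*k) / (4^k * fact k)"
proof -
  have halves: "real (2*k+1) / 2 = real k + 1/2" "(real (2*k+1) + 1) / 2 = 1 + real k"
    by (simp_all add: field_simps)
  have "Gamma (real k + 1/2) * Gamma (1 + real k) * 2 ^ (2*k) = sqrt pi * Gamma (1 + real (2*k))"
    using Gamma_duplication_nat[of "2*k+1", unfolded halves] by (simp add: add.commute)
  moreover have "(2::real) ^ (2*k) = 4 ^ k"
    unfolding power_mult by simp
  ultimately show ?thesis by (simp only: Gamma_fact) (simp add: field_simps)
qed

lemma Gamma_binomial_sum:
  assumes "(a::real) > 0"
  shows "(\<Sum>q\<le>n. real (n choose q) * Gamma (a + real q) * Gamma (a + real (n - q)))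
     = Gamma a ^ 2 * Gamma (2*a + real n) / Gamma (2*a)"
proof -
  have Gamma_pochhammer: "Gamma (b + real j) = Gamma b * pochhammer b j" if "b > 0" for b :: real and j
  proof -
    have "b \<notin> \<int>\<^sub>\<le>\<^sub>0" using that by (auto dest: nonpos_Ints_nonpos)
    then show ?thesis using pochhammer_Gamma[of b j] Gamma_real_pos[OF that] by (simp add: field_simps)
  qed
  have "(\<Sum>q\<le>n. real (n choose q) * Gamma (a + real q) * Gamma (a + real (n - q)))
      = Gamma a ^ 2 * (\<Sum>q\<le>n. real (n choose q) * pochhammer a q * pochhammer a (n - q))"
    unfolding sum_distrib_left
  proof (intro sum.cong refl)
    fix q
    show "real (n choose q) * Gamma (a + real q) * Gamma (a + real (n - q)) =
        Gamma a ^ 2 * (real (n choose q) * pochhammer a q * pochhammer a (n - q))"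
      unfolding Gamma_pochhammer[OF assms] by (simp add: power2_eq_square)
  qed
  also have "(\<Sum>q\<le>n. real (n choose q) * pochhammer a q * pochhammer a (n - q)) = pochhammer (a + a) n"
    by (rule pochhammer_binomial_sum[symmetric])
  also have "\<dots> = pochhammer (2*a) n"
    by simp
  also have "\<dots> = Gamma (2*a + real n) / Gamma (2*a)"
  proof -
    have "0 < 2*a" using assms by simp
    then have "Gamma (2*a) \<noteq> 0" by (metis Gamma_real_pos less_irrefl)
    then show ?thesis using Gamma_pochhammer[of "2*a" n] \<open>0 < 2*a\<close> by simp
  qed
  finally show ?thesis by simp
qed

section \<open>Moments of the chi distribution\<close>

lemma gaussian_half_moment:
  "has_bochner_integral lborel (\<lambda>x::real. indicator {0..} x *\<^sub>R (exp (-x\<^sup>2) * x^n))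
     (Gamma ((real n + 1)/2) / 2)"
proof (cases "even n")
  case True
  then obtain k where n: "n = 2*k" by auto
  have "Gamma ((real n + 1)/2) / 2 = (sqrt pi / 2) * (fact (2*k) / (2 ^ (2*k) * fact k))"
    by (simp add: n add_divide_distrib Gamma_nat_plus_half power_mult)
  then show ?thesis using gaussian_moment_even_pos[of k] by (simp only: n)
next
  case False
  then obtain k where n: "n = 2*k + 1" using oddE by blast
  have "(real n + 1)/2 = 1 + real k" by (simp add: n)
  then have "Gamma ((real n + 1)/2) / 2 = fact k / 2" by (simp only: Gamma_fact)
  then show ?thesis using gaussian_moment_odd_pos[of k] by (simp only: n)
qed

lemma gaussian_half_moment_scaled:
  "has_bochner_integral lborel (\<lambda>y::real. indicator {0..} y * (exp (-y\<^sup>2/2) * y^n))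
     (sqrt 2 ^ (n+1) * Gamma ((real n + 1)/2) / 2)"
proof -
  have "has_bochner_integral lborel
      (\<lambda>y. sqrt 2 ^ n * (indicator {0..} (y / sqrt 2) *\<^sub>R (exp (-(y / sqrt 2)\<^sup>2) * (y / sqrt 2)^n)))
      (sqrt 2 ^ n * (Gamma ((real n + 1)/2) / 2 * sqrt 2))"
    using lborel_has_bochner_integral_real_affine_iff[of "1 / sqrt 2" _ _ 0, THEN iffD1,
        OF _ gaussian_half_moment[of n]]
    by (intro has_bochner_integral_mult_right) (simp add: mult_ac)
  moreover have "sqrt 2 ^ n * (indicator {0..} (y / sqrt 2) *\<^sub>R (exp (-(y / sqrt 2)\<^sup>2) * (y / sqrt 2)^n))
      = indicator {0..} y * (exp (-y\<^sup>2/2) * y^n)" for y :: real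
    by (simp add: indicator_def zero_le_divide_iff power_divide)
  ultimately show ?thesis by (simp add: mult_ac)
qed

definition chi_moment :: "nat \<Rightarrow> nat \<Rightarrow> real" where
  "chi_moment d s = sqrt 2 ^ s * Gamma ((real d + real s) / 2) / Gamma (real d / 2)"

lemma chi_density_nonneg: "d \<ge> 1 \<Longrightarrow> chi_density d x \<ge> 0"
  by (simp add: chi_density_def)

lemma borel_measurable_chi_density [measurable]: "chi_density d \<in> borel_measurable borel"
  unfolding chi_density_def[abs_def] by measurable

lemma has_bochner_integral_chi_moment:
  assumes "d \<ge> 1"
  shows "has_bochner_integral lborel (\<lambda>x. chi_density d x * x ^ s) (chi_moment d s)"
proof -
  define n where "n = d - 1 + s"
  define C where "C = 2 powr (real d / 2 - 1) * Gamma (real d / 2)"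
  have "C > 0" using assms by (simp add: C_def)
  have "has_bochner_integral lborel (\<lambda>x. indicator {0..} x * (exp (-x\<^sup>2/2) * x^n) / C)
      (sqrt 2 ^ (n+1) * Gamma ((real n + 1)/2) / 2 / C)"
    by (intro has_bochner_integral_divide_zero gaussian_half_moment_scaled)
  moreover have "AE x in lborel. indicator {0..} x * (exp (-x\<^sup>2/2) * x^n) / C = chi_density d x * x ^ s"
    using AE_lborel_singleton[of 0]
  proof eventually_elim
    case (elim x)
    have "x ^ n = x ^ (d - 1) * x ^ s" by (simp only: n_def power_add)
    then show ?case
      using elim assms by (cases "x > 0") (auto simp: chi_density_def C_def indicator_def)
  qed
  moreover have "sqrt 2 ^ (n+1) * Gamma ((real n + 1)/2) / 2 / C = chi_moment d s"
  proof -
    have "n + 1 = d + s" "real n + 1 = real d + real s"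
      using assms by (simp_all add: n_def)
    then have "sqrt 2 ^ (n+1) * Gamma ((real n + 1)/2) / 2 / C
        = sqrt 2 ^ d * sqrt 2 ^ s * Gamma ((real d + real s)/2) / 2 / C"
      by (simp only: power_add)
    also have "sqrt 2 ^ d = 2 * 2 powr (real d / 2 - 1)"
      using powr_power[of "2::real" "1/2" d] by (simp add: powr_diff powr_half_sqrt)
    finally show ?thesis
      using \<open>C > 0\<close> by (simp add: C_def chi_moment_def)
  qed
  ultimately show ?thesis
    by (subst (asm) has_bochner_integral_cong_AE) auto
qed

lemma (in prob_space) chi_distributed_moment:
  assumes "d \<ge> 1" and X: "distributed M lborel X (\<lambda>x. ennreal (chi_density d x))"
  shows "integrable M (\<lambda>\<omega>. X \<omega> ^ s)" and "expectation (\<lambda>\<omega>. X \<omega> ^ s) = chi_moment d s"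
proof -
  have "(\<lambda>x::real. x ^ s) \<in> borel_measurable lborel" by measurable
  note distr = distributed_integrable[OF X this] distributed_integral[OF X this]
  show "integrable M (\<lambda>\<omega>. X \<omega> ^ s)" and "expectation (\<lambda>\<omega>. X \<omega> ^ s) = chi_moment d s"
    using distr has_bochner_integral_chi_moment[OF assms(1), of s] chi_density_nonneg[OF assms(1)]
    by (auto simp: has_bochner_integral_iff)
qed

lemma (in prob_space) indep_chi_product_moment:
  assumes "d \<ge> 1"
    and A: "distributed M lborel A (\<lambda>x. ennreal (chi_density d x))"
    and B: "distributed M lborel B (\<lambda>x. ennreal (chi_density d x))"
    and "indep_var borel A borel B"
  shows "integrable M (\<lambda>\<omega>. A \<omega> ^ s * B \<omega> ^ r)"
    and "expectation (\<lambda>\<omega>. A \<omega> ^ s * B \<omega> ^ r) = chi_moment d s * chi_moment d r"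
proof -
  have "indep_var borel ((\<lambda>x. x ^ s) \<circ> A) borel ((\<lambda>x. x ^ r) \<circ> B)"
    using assms(4) by (rule indep_var_compose) measurable
  then have indep: "indep_var borel (\<lambda>\<omega>. A \<omega> ^ s) borel (\<lambda>\<omega>. B \<omega> ^ r)"
    by (simp add: comp_def)
  note moments = chi_distributed_moment[OF assms(1) A] chi_distributed_moment[OF assms(1) B]
  show "integrable M (\<lambda>\<omega>. A \<omega> ^ s * B \<omega> ^ r)"
    using indep_var_integrable[OF indep] moments by blast
  show "expectation (\<lambda>\<omega>. A \<omega> ^ s * B \<omega> ^ r) = chi_moment d s * chi_moment d r"
    using indep_var_lebesgue_integral[OF indep] moments by simp
qed

section \<open>Sums of two scaled rows\<close>

definition unit_pair_sqnorm :: "real \<Rightarrow> real \<Rightarrow> real \<Rightarrow> real" where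
  "unit_pair_sqnorm c a b = a\<^sup>2 + b\<^sup>2 + 2 * c * a * b"

lemma norm_scaleR_add_unit_sq:
  assumes "norm u = 1" and "norm w = 1"
  shows "(norm (a *\<^sub>R u + b *\<^sub>R w))\<^sup>2 = unit_pair_sqnorm (inner u w) a b"
  using assms unfolding power2_norm_eq_inner unit_pair_sqnorm_def norm_eq_1
  by (simp add: inner_add_left inner_add_right inner_commute power2_eq_square algebra_simps)

lemma unit_pair_sqnorm_nonneg:
  assumes "\<bar>c\<bar> \<le> 1"
  shows "unit_pair_sqnorm c a b \<ge> 0"
proof -
  have "\<bar>2 * c * a * b\<bar> \<le> 2 * \<bar>a * b\<bar>"
    using assms by (simp add: abs_mult mult_left_le_one_le)
  moreover have "2 * \<bar>a * b\<bar> \<le> a\<^sup>2 + b\<^sup>2"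
    using sum_squares_bound[of "\<bar>a\<bar>" "\<bar>b\<bar>"] by (simp add: abs_mult power2_eq_square)
  ultimately show ?thesis unfolding unit_pair_sqnorm_def by linarith
qed

lemma unit_pair_sqnorm_le:
  assumes "\<bar>c\<bar> \<le> 1"
  shows "unit_pair_sqnorm c a b \<le> 2 * unit_pair_sqnorm 0 a b"
  using unit_pair_sqnorm_nonneg[of "- c" a b] assms by (simp add: unit_pair_sqnorm_def)

lemma row_matrix_matrix_mult: "(A ** B) $ i = A $ i v* B"
  by (simp add: vec_eq_iff matrix_matrix_mult_def vector_matrix_mult_def)

lemma inner_vector_matrix_mult_orthogonal:
  assumes "orthogonal_matrix (R :: real^'n^'n)"
  shows "inner (x v* R) (y v* R) = inner x y"
proof -
  have "inner (x v* R) (y v* R) = inner x (R *v (transpose R *v y))"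
    by (simp add: dot_lmul_matrix)
  also have "\<dots> = inner x y"
    using assms by (simp add: matrix_vector_mul_assoc orthogonal_matrix_def del: transpose_matrix_vector)
  finally show ?thesis .
qed

lemma norm_scaleR_add_rows_orthogonal:
  assumes "orthogonal_matrix (R :: real^'n^'n)"
  shows "norm (a *\<^sub>R (S ** R) $ p + b *\<^sub>R (S ** R) $ q) = norm (a *\<^sub>R S $ p + b *\<^sub>R S $ q)"
proof -
  have "a *\<^sub>R (S ** R) $ p + b *\<^sub>R (S ** R) $ q = (a *\<^sub>R S $ p + b *\<^sub>R S $ q) v* R"
    by (simp add: row_matrix_matrix_mult vector_matrix_left_distrib scaleR_vector_matrix_assoc)
  then show ?thesis
    using inner_vector_matrix_mult_orthogonal[OF assms] by (simp add: norm_eq_sqrt_inner)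
qed

lemma row_mat_1: "(mat 1 :: real^'n^'n) $ p = axis p 1"
  by (simp add: vec_eq_iff mat_def axis_def)

lemma simplex_constants:
  fixes d :: real
  assumes "d > 1"
  defines "\<alpha> \<equiv> sqrt (d / (d - 1))" and "\<beta> \<equiv> (sqrt d + 1) / (d - 1) powr (3/2)"
  shows "\<alpha>\<^sup>2 - 2*\<alpha>*\<beta> + \<beta>\<^sup>2 * (d - 1) = 1"
    and "- 2*\<alpha>*\<beta> + \<beta>\<^sup>2 * (d - 1) = -1 / (d - 1)"
    and "(\<alpha> - \<beta> * (d - 1)) / sqrt (d - 1) = -1 / (d - 1)"
proof -
  define q where "q = sqrt (d - 1)"
  define s where "s = sqrt d"
  have "q > 0" and dq: "d - 1 = q\<^sup>2" and sq: "s\<^sup>2 = q\<^sup>2 + 1"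
    using assms(1) by (simp_all add: q_def s_def)
  have "(d - 1) powr (3/2) = (d - 1) powr (1 + 1/2)" by simp
  also have "\<dots> = q ^ 3"
    using assms(1) by (simp only: powr_add) (simp add: q_def powr_half_sqrt eval_nat_numeral)
  finally have \<beta>: "\<beta> = (s + 1) / q ^ 3"
    by (simp add: \<beta>_def s_def)
  have \<alpha>: "\<alpha> = s / q" by (simp add: \<alpha>_def s_def q_def real_sqrt_divide)
  have "\<alpha>\<^sup>2 = d / (d - 1)" using assms(1) by (simp add: \<alpha>_def)
  moreover show "- 2*\<alpha>*\<beta> + \<beta>\<^sup>2 * (d - 1) = -1 / (d - 1)"
  proof -
    have "- 2*\<alpha>*\<beta> + \<beta>\<^sup>2 * (d - 1) = ((s + 1)\<^sup>2 - 2 * s * (s + 1)) / q ^ 4"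
      unfolding \<alpha> \<beta> dq using \<open>q > 0\<close> by (simp add: field_simps eval_nat_numeral)
    also have "(s + 1)\<^sup>2 - 2 * s * (s + 1) = - q\<^sup>2"
      using sq by (simp add: power2_eq_square algebra_simps)
    finally show ?thesis
      unfolding dq using \<open>q > 0\<close> by (simp add: field_simps eval_nat_numeral)
  qed
  ultimately have "\<alpha>\<^sup>2 - 2*\<alpha>*\<beta> + \<beta>\<^sup>2 * (d - 1) = d / (d - 1) - 1 / (d - 1)"
    by simp
  also have "\<dots> = 1" using assms(1) by (simp add: diff_divide_distrib[symmetric])
  finally show "\<alpha>\<^sup>2 - 2*\<alpha>*\<beta> + \<beta>\<^sup>2 * (d - 1) = 1" .
  show "(\<alpha> - \<beta> * (d - 1)) / sqrt (d - 1) = -1 / (d - 1)"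
    unfolding \<alpha> \<beta> dq q_def[symmetric] using \<open>q > 0\<close>
    by (simp add: field_simps eval_nat_numeral)
qed

lemma simplex_matrix_rows:
  fixes e :: "nat \<Rightarrow> 'n::finite"
  assumes "CARD('n) \<ge> 2"
  shows "norm (simplex_matrix e $ i) = 1"
    and "i \<noteq> j \<Longrightarrow> inner (simplex_matrix e $ i) (simplex_matrix e $ j) = -1 / (real CARD('n) - 1)"
proof -
  define d where "d = real CARD('n)"
  define z where "z = e (CARD('n) - 1)"
  define u where "u = (\<chi> k. if k = z then 0 else (1::real))"
  define \<alpha> where "\<alpha> = sqrt (d / (d - 1))"
  define \<beta> where "\<beta> = (sqrt d + 1) / (d - 1) powr (3/2)"
  have "d > 1" using assms by (simp add: d_def)
  note constants = simplex_constants[OF this, folded \<alpha>_def \<beta>_def]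
  have row: "simplex_matrix e $ r
      = (if r = z then (1 / sqrt (d - 1)) *\<^sub>R u else \<alpha> *\<^sub>R axis r 1 - \<beta> *\<^sub>R u)" for r
    by (simp add: simplex_matrix_def Let_def d_def z_def u_def \<alpha>_def \<beta>_def)
  have "inner u u = (\<Sum>k\<in>UNIV. if k = z then 0 else (1::real))"
    by (simp add: u_def inner_vec_def if_distrib cong: if_cong)
  also have "\<dots> = (\<Sum>k\<in>UNIV - {z}. 1)"
    by (simp add: sum.If_cases Diff_eq Int_commute)
  finally have uu: "inner u u = d - 1"
    by (simp add: d_def card_Diff_singleton of_nat_diff)
  have axis_u: "inner (axis r 1) u = (if r = z then 0 else 1)" "inner u (axis r 1) = (if r = z then 0 else 1)" for r
    by (simp_all add: inner_axis' inner_commute u_def)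
  have axis_axis: "inner (axis r (1::real) :: real^'n) (axis r' 1) = (if r = r' then 1 else 0)" for r r'
    by (simp add: inner_axis_axis)
  have "inner (simplex_matrix e $ i) (simplex_matrix e $ i) = 1"
    using constants(1) \<open>d > 1\<close>
    by (cases "i = z")
      (simp_all add: row uu axis_u axis_axis inner_diff_left inner_diff_right power2_eq_square algebra_simps)
  then show "norm (simplex_matrix e $ i) = 1" by (simp add: norm_eq_1)
  assume "i \<noteq> j"
  then show "inner (simplex_matrix e $ i) (simplex_matrix e $ j) = -1 / (real CARD('n) - 1)"
    using constants(2,3) \<open>d > 1\<close> unfolding d_def[symmetric]
    by (cases "i = z"; cases "j = z")
      (simp_all add: row uu axis_u axis_axis inner_diff_left inner_diff_right power2_eq_square field_simps)
qed

section \<open>Moments of the squared norm\<close>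

lemma unit_pair_sqnorm_power_expand:
  "unit_pair_sqnorm c a b ^ k = (\<Sum>p\<le>k. \<Sum>q\<le>k-p. real (k choose p) * real ((k-p) choose q) * (2*c)^p
      * (a ^ (p + 2*q) * b ^ (p + 2*(k-p-q))))"
proof -
  have "unit_pair_sqnorm c a b ^ k = (\<Sum>p\<le>k. real (k choose p) * (2*c*a*b)^p * (a\<^sup>2 + b\<^sup>2)^(k-p))"
    unfolding unit_pair_sqnorm_def binomial_ring[symmetric] by (simp add: ac_simps)
  also have "\<dots> = (\<Sum>p\<le>k. \<Sum>q\<le>k-p. real (k choose p) * real ((k-p) choose q) * (2*c)^p
      * (a ^ (p + 2*q) * b ^ (p + 2*(k-p-q))))"
    unfolding binomial_ring sum_distrib_left
    by (intro sum.cong refl) (simp add: power_add power_mult_distrib ac_simps flip: power_mult)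
  finally show ?thesis .
qed

lemma chi_moment_binomial_sum:
  assumes "d \<ge> 1"
  shows "(\<Sum>q\<le>n. real (n choose q) * (chi_moment d (p + 2*q) * chi_moment d (p + 2*(n-q))))
    = 2 ^ (p+n) * Gamma ((real d + real p) / 2) ^ 2 * Gamma (real d + real p + real n)
        / (Gamma (real d / 2) ^ 2 * Gamma (real d + real p))"
proof -
  define \<alpha> where "\<alpha> = (real d + real p) / 2"
  have "\<alpha> > 0" using assms by (simp add: \<alpha>_def)
  have two_alpha: "2 * \<alpha> = real d + real p" by (simp add: \<alpha>_def)
  have "chi_moment d (p + 2*q) * chi_moment d (p + 2*(n-q))
      = 2 ^ (p+n) / Gamma (real d / 2) ^ 2 * (Gamma (\<alpha> + real q) * Gamma (\<alpha> + real (n - q)))"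
    if "q \<le> n" for q
  proof -
    have "sqrt 2 ^ (p + 2*q) * sqrt 2 ^ (p + 2*(n-q)) = sqrt (2::real) ^ (2 * (p + n))"
      using that by (simp flip: power_add)
    also have "\<dots> = 2 ^ (p + n)" by (simp only: power_mult) simp
    finally have pow: "sqrt 2 ^ (p + 2*q) * sqrt 2 ^ (p + 2*(n-q)) = (2::real) ^ (p + n)" .
    have arg: "(real d + real (p + 2*q)) / 2 = \<alpha> + real q"
      "(real d + real (p + 2*(n-q))) / 2 = \<alpha> + real (n - q)"
      using that by (simp_all add: \<alpha>_def field_simps)
    have "chi_moment d (p + 2*q) * chi_moment d (p + 2*(n-q))
        = (sqrt 2 ^ (p + 2*q) * sqrt 2 ^ (p + 2*(n-q))) / Gamma (real d / 2) ^ 2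
          * (Gamma (\<alpha> + real q) * Gamma (\<alpha> + real (n - q)))"
      unfolding chi_moment_def arg by (simp add: power2_eq_square)
    then show ?thesis unfolding pow .
  qed
  then have "(\<Sum>q\<le>n. real (n choose q) * (chi_moment d (p + 2*q) * chi_moment d (p + 2*(n-q))))
      = 2 ^ (p+n) / Gamma (real d / 2) ^ 2
          * (\<Sum>q\<le>n. real (n choose q) * Gamma (\<alpha> + real q) * Gamma (\<alpha> + real (n - q)))"
    by (simp add: sum_distrib_left mult_ac)
  also have "\<dots> = 2 ^ (p+n) / Gamma (real d / 2) ^ 2
      * (Gamma \<alpha> ^ 2 * Gamma (real d + real p + real n) / Gamma (real d + real p))"
    using Gamma_binomial_sum[OF \<open>\<alpha> > 0\<close>, of n, unfolded two_alpha] by simp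
  finally show ?thesis by (simp add: \<alpha>_def)
qed

definition unit_pair_moment :: "nat \<Rightarrow> real \<Rightarrow> nat \<Rightarrow> real" where
  "unit_pair_moment d c k = 2 ^ k * fact k * sqrt pi * Gamma (real d + real k) / (Gamma (real d / 2) ^ 2 * 2 ^ (d - 1))
     * (\<Sum>p\<le>k. c ^ p * Gamma ((real d + real p) / 2) / Gamma ((real d + real p + 1) / 2) / (fact (k - p) * fact p))"

lemma unit_pair_moment_summand:
  assumes "d \<ge> 1" and "p \<le> k"
  shows "real (k choose p) * (2*c) ^ p * (2 ^ k * Gamma ((real d + real p) / 2) ^ 2 * Gamma (real d + real k)
            / (Gamma (real d / 2) ^ 2 * Gamma (real d + real p)))
    = 2 ^ k * fact k * sqrt pi * Gamma (real d + real k) / (Gamma (real d / 2) ^ 2 * 2 ^ (d - 1))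
        * (c ^ p * Gamma ((real d + real p) / 2) / Gamma ((real d + real p + 1) / 2) / (fact (k - p) * fact p))"
proof -
  define a where "a = Gamma ((real d + real p) / 2)"
  define b where "b = Gamma ((real d + real p + 1) / 2)"
  have "a > 0" "b > 0" "Gamma (real d / 2) > 0"
    using assms(1) by (simp_all add: a_def b_def)
  have "(2::real) ^ (d + p - 1) = 2 ^ (d - 1) * 2 ^ p"
    using assms(1) by (simp flip: power_add)
  then have dup: "Gamma (real d + real p) = a * b * 2 ^ (d - 1) * 2 ^ p / sqrt pi"
    using Gamma_duplication_nat[of "d + p"] assms(1) by (simp add: a_def b_def field_simps)
  have binom: "real (k choose p) = fact k / (fact p * fact (k - p))"
    by (rule binomial_fact[OF assms(2)])
  show ?thesis
    unfolding a_def[symmetric] b_def[symmetric] dup binom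
    using \<open>a > 0\<close> \<open>b > 0\<close> \<open>Gamma (real d / 2) > 0\<close>
    by (simp add: power_mult_distrib field_simps power2_eq_square)
qed

lemma (in prob_space) expectation_unit_pair_sqnorm_power:
  assumes "d \<ge> 1"
    and "distributed M lborel A (\<lambda>x. ennreal (chi_density d x))"
    and "distributed M lborel B (\<lambda>x. ennreal (chi_density d x))"
    and "indep_var borel A borel B"
  shows "integrable M (\<lambda>\<omega>. unit_pair_sqnorm c (A \<omega>) (B \<omega>) ^ k)"
    and "expectation (\<lambda>\<omega>. unit_pair_sqnorm c (A \<omega>) (B \<omega>) ^ k) = unit_pair_moment d c k"
proof -
  note products = indep_chi_product_moment[OF assms]
  show "integrable M (\<lambda>\<omega>. unit_pair_sqnorm c (A \<omega>) (B \<omega>) ^ k)"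
    unfolding unit_pair_sqnorm_power_expand by (simp add: products)
  have "expectation (\<lambda>\<omega>. unit_pair_sqnorm c (A \<omega>) (B \<omega>) ^ k)
      = (\<Sum>p\<le>k. real (k choose p) * (2*c)^p *
          (\<Sum>q\<le>k-p. real ((k-p) choose q) * (chi_moment d (p + 2*q) * chi_moment d (p + 2*(k-p-q)))))"
    unfolding unit_pair_sqnorm_power_expand
    by (simp add: integral_sum integrable_sum products sum_distrib_left mult_ac)
  also have "\<dots> = (\<Sum>p\<le>k. real (k choose p) * (2*c)^p *
      (2 ^ k * Gamma ((real d + real p) / 2) ^ 2 * Gamma (real d + real k)
         / (Gamma (real d / 2) ^ 2 * Gamma (real d + real p))))"
  proof (intro sum.cong refl arg_cong[where f = "\<lambda>x. _ * x"])
    fix p assume "p \<in> {..k}"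
    then have "p + (k - p) = k" "real d + real p + real (k - p) = real d + real k" by auto
    then show "(\<Sum>q\<le>k-p. real ((k-p) choose q) * (chi_moment d (p + 2*q) * chi_moment d (p + 2*(k-p-q))))
        = 2 ^ k * Gamma ((real d + real p) / 2) ^ 2 * Gamma (real d + real k)
            / (Gamma (real d / 2) ^ 2 * Gamma (real d + real p))"
      using chi_moment_binomial_sum[OF assms(1), of "k - p" p] by (simp add: diff_diff_add)
  qed
  also have "\<dots> = unit_pair_moment d c k"
    unfolding unit_pair_moment_def sum_distrib_left
    by (intro sum.cong refl unit_pair_moment_summand[OF assms(1)]) simp
  finally show "expectation (\<lambda>\<omega>. unit_pair_sqnorm c (A \<omega>) (B \<omega>) ^ k) = unit_pair_moment d c k" .
qed

lemma unit_pair_moment_0: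
  assumes "d \<ge> 1"
  shows "unit_pair_moment d 0 k = 2 ^ k * Gamma (real d + real k) / Gamma (real d)"
proof -
  have "(\<Sum>p\<le>k. 0 ^ p * Gamma ((real d + real p) / 2) / Gamma ((real d + real p + 1) / 2) / (fact (k - p) * fact p))
      = Gamma (real d / 2) / Gamma ((real d + 1) / 2) / fact k"
    by (simp add: sum.atMost_shift)
  moreover have "Gamma (real d / 2) * Gamma ((real d + 1) / 2) * 2 ^ (d - 1) = sqrt pi * Gamma (real d)"
    using Gamma_duplication_nat[OF assms] .
  moreover have "Gamma (real d / 2) > 0" "Gamma ((real d + 1) / 2) > 0" "Gamma (real d) > 0"
    using assms by simp_all
  ultimately show ?thesis
    unfolding unit_pair_moment_def by (simp add: field_simps power2_eq_square)
qed

section \<open>The kernel series\<close>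

definition rf_coeff :: "nat \<Rightarrow> real \<Rightarrow> nat \<Rightarrow> real" where
  "rf_coeff d v k = v ^ (2*k) / (2 ^ (2*k) * fact k * Gamma (real k + real d / 2))"

lemma rf_kernel_eq_suminf: "rf_kernel d v w = (\<Sum>k. rf_coeff d v k * (w\<^sup>2) ^ k)"
  unfolding rf_kernel_def rf_coeff_def by (simp add: power_mult)

lemma rf_coeff_nonneg: "d \<ge> 1 \<Longrightarrow> rf_coeff d v k \<ge> 0"
  by (simp add: rf_coeff_def)

lemma rf_coeff_Suc:
  assumes "d \<ge> 1"
  shows "rf_coeff d v (Suc k) = rf_coeff d v k * (v\<^sup>2 / (4 * (real k + 1) * (real k + real d / 2)))"
proof -
  have pos: "real k + real d / 2 > 0" using assms by simp
  have Gamma_Suc: "Gamma (real (Suc k) + real d / 2) = (real k + real d / 2) * Gamma (real k + real d / 2)"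
    using Gamma_plus1_real[OF pos] by (simp add: add_ac)
  show ?thesis
    unfolding rf_coeff_def Gamma_Suc using pos Gamma_real_pos[OF pos]
    by (simp add: power_add power_mult field_simps power2_eq_square)
qed

lemma summable_ratio_bound_nat:
  fixes f :: "nat \<Rightarrow> real"
  assumes "\<And>k. f k \<ge> 0" and "\<And>k. f (Suc k) \<le> C / (real k + 1) * f k"
  shows "summable f"
proof (rule summable_ratio_test[where c="1/2" and N="nat \<lceil>2*C\<rceil>"])
  fix n assume "n \<ge> nat \<lceil>2*C\<rceil>"
  then have "C / (real n + 1) \<le> 1/2" by (simp add: field_simps)
  with assms have "f (Suc n) \<le> 1/2 * f n"
    by (metis mult_right_mono order_trans)
  then show "norm (f (Suc n)) \<le> 1/2 * norm (f n)" using assms(1) by simp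
qed simp

lemma summable_rf_coeff_power:
  assumes "d \<ge> 1" and "x \<ge> 0"
  shows "summable (\<lambda>k. rf_coeff d v k * x ^ k)"
proof (rule summable_ratio_bound_nat[where C = "v\<^sup>2 * x / 2"])
  fix k
  have "rf_coeff d v (Suc k) * x ^ Suc k
      = v\<^sup>2 * x / (4 * (real k + 1) * (real k + real d / 2)) * (rf_coeff d v k * x ^ k)"
    using assms(1) by (simp add: rf_coeff_Suc field_simps)
  also have "\<dots> \<le> v\<^sup>2 * x / (2 * (real k + 1)) * (rf_coeff d v k * x ^ k)"
  proof (intro mult_right_mono frac_le)
    have "2 * (real k + 1) = 4 * (real k + 1) * (1/2)" by simp
    also have "\<dots> \<le> 4 * (real k + 1) * (real k + real d / 2)"
      using assms by (intro mult_left_mono) auto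
    finally show "2 * (real k + 1) \<le> 4 * (real k + 1) * (real k + real d / 2)" .
  qed (use assms in \<open>auto simp: rf_coeff_nonneg\<close>)
  finally show "rf_coeff d v (Suc k) * x ^ Suc k \<le> v\<^sup>2 * x / 2 / (real k + 1) * (rf_coeff d v k * x ^ k)"
    by simp
qed (use assms in \<open>simp add: rf_coeff_nonneg\<close>)

lemma summable_rf_coeff_majorant:
  assumes "d \<ge> 1"
  shows "summable (\<lambda>k. rf_coeff d v k * (4 ^ k * Gamma (real d + real k) / Gamma (real d)))"
proof (rule summable_ratio_bound_nat[where C = "2 * v\<^sup>2"])
  fix k
  let ?f = "\<lambda>k. rf_coeff d v k * (4 ^ k * Gamma (real d + real k) / Gamma (real d))"
  have Gamma_Suc: "Gamma (real d + real (Suc k)) = (real d + real k) * Gamma (real d + real k)"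
    using assms Gamma_plus1_real[of "real d + real k"] by (simp add: add_ac)
  have ratio: "X * (w / (4 * P * Q)) * (4 ^ Suc k * (D * G) / g) = w / P * (D / Q) * (X * (4 ^ k * G / g))"
    for X w P Q D G g :: real
    by (simp add: mult_ac)
  have "?f (Suc k) = v\<^sup>2 / (real k + 1) * ((real d + real k) / (real k + real d / 2)) * ?f k"
    unfolding rf_coeff_Suc[OF assms] Gamma_Suc by (rule ratio)
  also have "\<dots> \<le> v\<^sup>2 / (real k + 1) * 2 * ?f k"
    using assms by (intro mult_right_mono mult_left_mono) (auto simp: rf_coeff_nonneg divide_le_eq)
  finally show "?f (Suc k) \<le> 2 * v\<^sup>2 / (real k + 1) * ?f k"
    by (simp add: mult_ac)
qed (use assms in \<open>simp add: rf_coeff_nonneg\<close>)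

lemma (in prob_space) unit_pair_moment_bounds:
  assumes "d \<ge> 1"
    and "distributed M lborel A (\<lambda>x. ennreal (chi_density d x))"
    and "distributed M lborel B (\<lambda>x. ennreal (chi_density d x))"
    and "indep_var borel A borel B" and "\<bar>c\<bar> \<le> 1"
  shows "unit_pair_moment d c k \<ge> 0"
    and "unit_pair_moment d c k \<le> 4 ^ k * Gamma (real d + real k) / Gamma (real d)"
proof -
  note moment = expectation_unit_pair_sqnorm_power[OF assms(1-4)]
  show "unit_pair_moment d c k \<ge> 0"
    unfolding moment(2)[symmetric] using assms(5) by (intro integral_nonneg_AE AE_I2 unit_pair_sqnorm_nonneg zero_le_power)
  have "unit_pair_moment d c k \<le> expectation (\<lambda>\<omega>. 2 ^ k * unit_pair_sqnorm 0 (A \<omega>) (B \<omega>) ^ k)"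
    unfolding moment(2)[symmetric]
  proof (rule integral_mono)
    fix \<omega>
    have "unit_pair_sqnorm c (A \<omega>) (B \<omega>) ^ k \<le> (2 * unit_pair_sqnorm 0 (A \<omega>) (B \<omega>)) ^ k"
      using assms(5) by (intro power_mono unit_pair_sqnorm_le unit_pair_sqnorm_nonneg)
    then show "unit_pair_sqnorm c (A \<omega>) (B \<omega>) ^ k \<le> 2 ^ k * unit_pair_sqnorm 0 (A \<omega>) (B \<omega>) ^ k"
      by (simp add: power_mult_distrib)
  qed (intro integrable_mult_right moment(1))+
  also have "\<dots> = 4 ^ k * Gamma (real d + real k) / Gamma (real d)"
  proof -
    have "(2::real) ^ k * 2 ^ k = 4 ^ k" by (simp flip: power_mult_distrib)
    then show ?thesis using moment(2)[of 0] unit_pair_moment_0[OF assms(1)] by simp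
  qed
  finally show "unit_pair_moment d c k \<le> 4 ^ k * Gamma (real d + real k) / Gamma (real d)" .
qed

lemma (in prob_space) expectation_rf_kernel_series:
  assumes "d \<ge> 1"
    and "distributed M lborel A (\<lambda>x. ennreal (chi_density d x))"
    and "distributed M lborel B (\<lambda>x. ennreal (chi_density d x))"
    and "indep_var borel A borel B" and "\<bar>c\<bar> \<le> 1"
  shows "expectation (\<lambda>\<omega>. \<Sum>k. rf_coeff d v k * unit_pair_sqnorm c (A \<omega>) (B \<omega>) ^ k)
           = (\<Sum>k. rf_coeff d v k * unit_pair_moment d c k)"
    and "summable (\<lambda>k. rf_coeff d v k * unit_pair_moment d c k)"
proof -
  define f where "f k \<omega> = rf_coeff d v k * unit_pair_sqnorm c (A \<omega>) (B \<omega>) ^ k" for k \<omega>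
  note moment = expectation_unit_pair_sqnorm_power[OF assms(1-4)]
  note bounds = unit_pair_moment_bounds[OF assms]
  have f_nonneg: "f k \<omega> \<ge> 0" for k \<omega>
    unfolding f_def using rf_coeff_nonneg[OF assms(1)] unit_pair_sqnorm_nonneg[OF assms(5)] by simp
  have f_integrable: "integrable M (f k)" for k
    unfolding f_def by (intro integrable_mult_right moment(1))
  have "(\<integral>\<omega>. norm (f k \<omega>) \<partial>M) = rf_coeff d v k * unit_pair_moment d c k" for k
    using f_nonneg by (simp add: f_def moment(2))
  moreover have "rf_coeff d v k * unit_pair_moment d c k
      \<le> rf_coeff d v k * (4 ^ k * Gamma (real d + real k) / Gamma (real d))" for k
    using bounds(2) rf_coeff_nonneg[OF assms(1)] by (rule mult_left_mono)
  ultimately have summable_integrals: "summable (\<lambda>k. \<integral>\<omega>. norm (f k \<omega>) \<partial>M)"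
    using rf_coeff_nonneg[OF assms(1)] bounds(1)
    by (intro summable_comparison_test'[OF summable_rf_coeff_majorant[OF assms(1), of v]]) simp
  have "summable (\<lambda>k. f k \<omega>)" for \<omega>
    unfolding f_def by (rule summable_rf_coeff_power[OF assms(1) unit_pair_sqnorm_nonneg[OF assms(5)]])
  then have "AE \<omega> in M. summable (\<lambda>k. norm (f k \<omega>))"
    using f_nonneg by simp
  note dominated = f_integrable this summable_integrals
  show "expectation (\<lambda>\<omega>. \<Sum>k. rf_coeff d v k * unit_pair_sqnorm c (A \<omega>) (B \<omega>) ^ k)
      = (\<Sum>k. rf_coeff d v k * unit_pair_moment d c k)"
    using integral_suminf[OF dominated] by (simp add: f_def moment(2))
  show "summable (\<lambda>k. rf_coeff d v k * unit_pair_moment d c k)"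
    using summable_integral[OF dominated] by (simp add: f_def moment(2))
qed

lemma suminf_rescale:
  fixes X Y :: "nat \<Rightarrow> real"
  assumes "summable X" and "\<And>k. a * X k = b * Y k" and "b \<noteq> 0"
  shows "a * suminf X = b * suminf Y"
proof -
  have "Y = (\<lambda>k. a / b * X k)"
    using assms(2,3) by (auto simp: fun_eq_iff field_simps)
  then show ?thesis
    using assms(3) suminf_mult[OF assms(1), of "a / b"] suminf_mult[OF assms(1), of a] by simp
qed

lemma rf_series_orthogonal:
  assumes "d \<ge> 1" and "summable (\<lambda>k. rf_coeff d v k * unit_pair_moment d 0 k)"
  shows "Gamma (real d / 2) * (\<Sum>k. rf_coeff d v k * unit_pair_moment d 0 k)
    = Gamma (real d / 2) / Gamma (real d) *
      (\<Sum>k. v ^ (2*k) / (2 ^ k * fact k) * Gamma (real k + real d) / Gamma (real k + real d / 2))"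
proof (rule suminf_rescale[OF assms(2)])
  fix k
  have "Gamma (real d / 2) > 0" "Gamma (real d) > 0" "Gamma (real k + real d / 2) > 0"
    using assms(1) by simp_all
  then show "Gamma (real d / 2) * (rf_coeff d v k * unit_pair_moment d 0 k)
    = Gamma (real d / 2) / Gamma (real d) *
      (v ^ (2*k) / (2 ^ k * fact k) * Gamma (real k + real d) / Gamma (real k + real d / 2))"
    unfolding unit_pair_moment_0[OF assms(1)] rf_coeff_def
    by (simp add: field_simps power_mult power2_eq_square add.commute)
qed (use assms(1) in \<open>auto simp: Gamma_eq_zero_iff dest: nonpos_Ints_nonpos\<close>)

lemma rf_series_simplex:
  assumes "d \<ge> 1" and "summable (\<lambda>k. rf_coeff d v k * unit_pair_moment d c k)"
  shows "Gamma (real d / 2) * (\<Sum>k. rf_coeff d v k * unit_pair_moment d c k)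
    = sqrt pi / (Gamma (real d / 2) * 2 ^ (d - 1)) *
      (\<Sum>k. Gamma (real k + real d) / Gamma (real k + real d / 2) * v ^ (2*k) / 2 ^ k
        * (\<Sum>p\<le>k. c ^ p * Gamma ((real d + real p) / 2) / Gamma ((real d + real p + 1) / 2)
            / (fact (k - p) * fact p)))"
proof (rule suminf_rescale[OF assms(2)])
  fix k
  define Z where "Z = (\<Sum>p\<le>k. c ^ p * Gamma ((real d + real p) / 2) / Gamma ((real d + real p + 1) / 2)
            / (fact (k - p) * fact p))"
  have "Gamma (real d / 2) > 0" "Gamma (real k + real d / 2) > 0"
    using assms(1) by simp_all
  then show "Gamma (real d / 2) * (rf_coeff d v k * unit_pair_moment d c k)
    = sqrt pi / (Gamma (real d / 2) * 2 ^ (d - 1)) *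
      (Gamma (real k + real d) / Gamma (real k + real d / 2) * v ^ (2*k) / 2 ^ k * Z)"
    unfolding unit_pair_moment_def rf_coeff_def Z_def[symmetric]
    by (simp add: field_simps power_mult power2_eq_square add.commute)
qed (use assms(1) in \<open>auto simp: Gamma_eq_zero_iff dest: nonpos_Ints_nonpos\<close>)

section \<open>RF-conformity of ORFs and SimRFs\<close>

lemma borel_measurable_row_matrix_mult [measurable]:
  "(\<lambda>X::real^'n^'m. (S ** X) $ p) \<in> borel_measurable borel"
proof -
  have "(\<lambda>X::real^'n^'m. (S ** X) $ p) = (\<lambda>X. \<Sum>l\<in>UNIV. (S $ p $ l) *\<^sub>R (X $ l))"
    by (simp add: fun_eq_iff vec_eq_iff matrix_matrix_mult_def sum_component)
  also have "\<dots> \<in> borel_measurable borel"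
    by (intro borel_measurable_continuous_onI continuous_intros)
  finally show ?thesis .
qed

lemma borel_measurable_rf_kernel [measurable]: "rf_kernel d v \<in> borel_measurable borel"
  unfolding rf_kernel_def[abs_def] by measurable

lemma (in prob_space) expectation_rf_kernel_rows:
  fixes R :: "'a \<Rightarrow> real^'n^'n" and S :: "real^'n^'n"
  assumes "d \<ge> 1"
    and A: "distributed M lborel A (\<lambda>x. ennreal (chi_density d x))"
    and B: "distributed M lborel B (\<lambda>x. ennreal (chi_density d x))"
    and "indep_var borel A borel B"
    and R: "R \<in> borel_measurable M" and orth: "AE \<omega> in M. orthogonal_matrix (R \<omega>)"
    and "norm (S $ p) = 1" "norm (S $ q) = 1"
  defines "c \<equiv> inner (S $ p) (S $ q)"
  shows "expectation (\<lambda>\<omega>. rf_kernel d v (norm (A \<omega> *\<^sub>R (S ** R \<omega>) $ p + B \<omega> *\<^sub>R (S ** R \<omega>) $ q)))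
           = (\<Sum>k. rf_coeff d v k * unit_pair_moment d c k)" (is "expectation ?K = _")
    and "summable (\<lambda>k. rf_coeff d v k * unit_pair_moment d c k)"
proof -
  let ?Q = "\<lambda>\<omega>. \<Sum>k. rf_coeff d v k * unit_pair_sqnorm c (A \<omega>) (B \<omega>) ^ k"
  have "\<bar>c\<bar> \<le> 1"
    using Cauchy_Schwarz_ineq2[of "S $ p" "S $ q"] assms(7,8) by (simp add: c_def)
  note series = expectation_rf_kernel_series[OF assms(1-4) this]
  have [measurable]: "R \<in> borel_measurable M" "A \<in> borel_measurable M" "B \<in> borel_measurable M"
    using R distributed_measurable[OF A] distributed_measurable[OF B] by simp_all
  have "?K \<in> borel_measurable M" "?Q \<in> borel_measurable M"
    unfolding unit_pair_sqnorm_def by measurable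
  moreover have "AE \<omega> in M. ?K \<omega> = ?Q \<omega>"
    using orth by eventually_elim
      (simp add: rf_kernel_eq_suminf norm_scaleR_add_rows_orthogonal norm_scaleR_add_unit_sq assms(7,8) c_def)
  ultimately have "expectation ?K = expectation ?Q"
    by (rule integral_cong_AE)
  then show "expectation ?K = (\<Sum>k. rf_coeff d v k * unit_pair_moment d c k)"
    using series(1) by simp
  show "summable (\<lambda>k. rf_coeff d v k * unit_pair_moment d c k)"
    by (rule series(2))
qed

lemma (in prob_space) indep_var_of_indep_vars:
  assumes "indep_vars (\<lambda>_. borel) W UNIV" and "p \<noteq> q"
  shows "indep_var borel (W p) borel (W q)"
proof -
  have "indep_var (PiM {p} (\<lambda>_. borel)) (\<lambda>\<omega>. restrict (\<lambda>i. W i \<omega>) {p})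
                  (PiM {q} (\<lambda>_. borel)) (\<lambda>\<omega>. restrict (\<lambda>i. W i \<omega>) {q})"
    using assms by (intro indep_var_restrict) auto
  then have "indep_var borel ((\<lambda>f. f p) \<circ> (\<lambda>\<omega>. restrict (\<lambda>i. W i \<omega>) {p}))
                       borel ((\<lambda>f. f q) \<circ> (\<lambda>\<omega>. restrict (\<lambda>i. W i \<omega>) {q}))"
    by (rule indep_var_compose) (auto intro: measurable_component_singleton)
  then show ?thesis by (simp add: comp_def)
qed

lemma AE_orthogonal_matrix_orth_haar:
  assumes "R \<in> borel_measurable M" and "orth_haar (distr M borel R)"
  shows "AE \<omega> in M. orthogonal_matrix (R \<omega>)"
proof -
  let ?N = "distr M borel R" and ?O = "{X :: real^'n^'n. orthogonal_matrix X}"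
  have N: "prob_space ?N" and E: "emeasure ?N ?O = 1"
    using assms(2) by (auto simp: orth_haar_def)
  have O: "?O \<in> sets ?N"
    using emeasure_notin_sets E by fastforce
  have "AE X in ?N. X \<in> ?O"
    using prob_space.AE_in_set_eq_1[OF N O] E by (simp add: measure_def)
  then show ?thesis
    using O by (simp add: AE_distr_iff[OF assms(1)])
qed

lemma rf_conformity_eq_const:
  assumes "2 \<le> m"
    and "\<And>i j. i < m \<Longrightarrow> j < m \<Longrightarrow> i \<noteq> j \<Longrightarrow>
           integral\<^sup>L M (\<lambda>\<omega>. rf_kernel d v (norm (wv i \<omega> + wv j \<omega>))) = X"
  shows "rf_conformity M d m v wv = Gamma (real d / 2) * X"
proof -
  have "(\<Sum>i<m. \<Sum>j\<in>{..<m} - {i}. integral\<^sup>L M (\<lambda>\<omega>. rf_kernel d v (norm (wv i \<omega> + wv j \<omega>))))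
      = (\<Sum>i<m. \<Sum>j\<in>{..<m} - {i}. X)"
    using assms(2) by (intro sum.cong refl) auto
  also have "\<dots> = real m * (real m - 1) * X"
    using assms(1) by (simp add: card_Diff_singleton of_nat_diff)
  finally show ?thesis
    using assms(1) by (simp add: rf_conformity_def)
qed

lemma (in prob_space) rf_conformity_rows:
  fixes W :: "'n::finite \<Rightarrow> 'a \<Rightarrow> real" and R :: "'a \<Rightarrow> real^'n^'n" and S :: "real^'n^'n"
  assumes "d \<ge> 1" and "2 \<le> m" and "inj_on e {..<m}"
    and chi: "\<And>k. distributed M lborel (W k) (\<lambda>x. ennreal (chi_density d x))"
    and indep: "indep_vars (\<lambda>_. borel) W UNIV"
    and "R \<in> borel_measurable M" and "AE \<omega> in M. orthogonal_matrix (R \<omega>)"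
    and unit: "\<And>p. norm (S $ p) = 1" and cos: "\<And>p q. p \<noteq> q \<Longrightarrow> inner (S $ p) (S $ q) = c"
  shows "rf_conformity M d m v (\<lambda>i \<omega>. W (e i) \<omega> *\<^sub>R (S ** R \<omega>) $ e i)
           = Gamma (real d / 2) * (\<Sum>k. rf_coeff d v k * unit_pair_moment d c k)"
    and "summable (\<lambda>k. rf_coeff d v k * unit_pair_moment d c k)"
proof -
  have rows: "expectation (\<lambda>\<omega>. rf_kernel d v (norm (W (e i) \<omega> *\<^sub>R (S ** R \<omega>) $ e i
          + W (e j) \<omega> *\<^sub>R (S ** R \<omega>) $ e j)))
        = (\<Sum>k. rf_coeff d v k * unit_pair_moment d c k)
      \<and> summable (\<lambda>k. rf_coeff d v k * unit_pair_moment d c k)"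
    if "i < m" "j < m" "i \<noteq> j" for i j
  proof -
    have "e i \<noteq> e j" using assms(3) that by (auto dest: inj_onD)
    then show ?thesis
      using expectation_rf_kernel_rows[OF assms(1) chi chi indep_var_of_indep_vars[OF indep]
          assms(6,7) unit[of "e i"] unit[of "e j"]] cos
      by simp
  qed
  then show "rf_conformity M d m v (\<lambda>i \<omega>. W (e i) \<omega> *\<^sub>R (S ** R \<omega>) $ e i)
      = Gamma (real d / 2) * (\<Sum>k. rf_coeff d v k * unit_pair_moment d c k)"
    using assms(2) by (intro rf_conformity_eq_const) auto
  show "summable (\<lambda>k. rf_coeff d v k * unit_pair_moment d c k)"
    using rows[of 0 1] assms(2) by simp
qed

theorem theorem4p3:
  fixes M :: "'a measure"
    and W :: "'n::finite \<Rightarrow> 'a \<Rightarrow> real"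
    and R :: "'a \<Rightarrow> real^'n^'n"
    and e :: "nat \<Rightarrow> 'n"
    and x y :: "real^'n"
    and m :: nat
  assumes "prob_space M"
    and "CARD('n) \<ge> 2" and "2 \<le> m" and "m \<le> CARD('n)"
    and "bij_betw e {..<CARD('n)} UNIV"
    and "\<And>k. distributed M lborel (W k) (\<lambda>t. ennreal (chi_density CARD('n) t))"
    and "R \<in> borel_measurable M" and "orth_haar (distr M borel R)"
    and "prob_space.indep_vars M (\<lambda>_. borel) W UNIV"
    and "\<And>A B. A \<in> sets (borel :: (real^'n) measure) \<Longrightarrow> B \<in> sets (borel :: (real^'n^'n) measure) \<Longrightarrow>
           measure M {\<omega> \<in> space M. (\<chi> k. W k \<omega>) \<in> A \<and> R \<omega> \<in> B}
             = measure M {\<omega> \<in> space M. (\<chi> k. W k \<omega>) \<in> A} * measure M {\<omega> \<in> space M. R \<omega> \<in> B}"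
  shows "(rf_conformity M CARD('n) m (norm (x + y)) (orf_vecs W R e)
           = Gamma (real CARD('n) / 2) / Gamma (real CARD('n)) *
             (\<Sum>k. norm (x + y) ^ (2*k) / (2 ^ k * fact k)
                   * Gamma (real k + real CARD('n)) / Gamma (real k + real CARD('n) / 2)))
       \<and> (rf_conformity M CARD('n) m (norm (x + y)) (simrf_vecs W R e)
           = sqrt pi / (Gamma (real CARD('n) / 2) * 2 ^ (CARD('n) - 1)) *
             (\<Sum>k. Gamma (real k + real CARD('n)) / Gamma (real k + real CARD('n) / 2)
                   * norm (x + y) ^ (2*k) / 2 ^ k
                   * (\<Sum>p\<le>k. (- 1 / (real CARD('n) - 1)) ^ p
                        * Gamma ((real CARD('n) + real p) / 2)
                        / Gamma ((real CARD('n) + real p + 1) / 2)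
                        / (fact (k - p) * fact p))))"
proof -
  interpret prob_space M by (rule assms(1))
  let ?d = "CARD('n)" and ?v = "norm (x + y)"
  have "?d \<ge> 1" using assms(2) by simp
  have inj: "inj_on e {..<m}"
    using bij_betw_imp_inj_on[OF assms(5)] by (rule inj_on_subset) (use assms(4) in auto)
  note rows = rf_conformity_rows[OF \<open>?d \<ge> 1\<close> assms(3) inj assms(6,9,7)
      AE_orthogonal_matrix_orth_haar[OF assms(7,8)]]
  have "orf_vecs W R e = (\<lambda>i \<omega>. W (e i) \<omega> *\<^sub>R (mat 1 ** R \<omega>) $ e i)"
    by (simp add: fun_eq_iff orf_vecs_def)
  then have orf: "rf_conformity M ?d m ?v (orf_vecs W R e)
      = Gamma (real ?d / 2) * (\<Sum>k. rf_coeff ?d ?v k * unit_pair_moment ?d 0 k)"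
    and orf_summable: "summable (\<lambda>k. rf_coeff ?d ?v k * unit_pair_moment ?d 0 k)"
    using rows[where S = "mat 1" and c = 0] by (simp_all add: row_mat_1 inner_axis_axis)
  have "simrf_vecs W R e = (\<lambda>i \<omega>. W (e i) \<omega> *\<^sub>R (simplex_matrix e ** R \<omega>) $ e i)"
    by (simp add: fun_eq_iff simrf_vecs_def)
  then have sim: "rf_conformity M ?d m ?v (simrf_vecs W R e)
      = Gamma (real ?d / 2) * (\<Sum>k. rf_coeff ?d ?v k * unit_pair_moment ?d (- 1 / (real ?d - 1)) k)"
    and sim_summable: "summable (\<lambda>k. rf_coeff ?d ?v k * unit_pair_moment ?d (- 1 / (real ?d - 1)) k)"
    using rows[where S = "simplex_matrix e" and c = "- 1 / (real ?d - 1)"]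
      simplex_matrix_rows[OF assms(2)] by simp_all
  show ?thesis
    unfolding orf sim
    using rf_series_orthogonal[OF \<open>?d \<ge> 1\<close> orf_summable]
      rf_series_simplex[OF \<open>?d \<ge> 1\<close> sim_summable]
    by (simp add: add.commute)
qed

end
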